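(* Let $T\in\mathcal{L}(\mathcal{H})$ have closed range and let $n\ge1$. If $T^n$ is hypo-EP, then $T$ is $n$-hypo-EP.
   Context: $\mathcal{H}$ is a Hilbert space, $\mathcal{L}(\mathcal{H})$ the bounded operators on it; $R(\cdot)$ denotes range. An operator $A$ is hypo-EP if $A$ has closed range and $R(A)\subset R(A^* )$ (equivalently $A^\dagger A-AA^\dagger\ge0$, with $A^\dagger$ the Moore–Penrose inverse). For $n\ge1$, $T$ is $n$-hypo-EP if $T$ has closed range and $R(T^n)\subset R(T^* )$. *)

theory Defs
  imports "HOL-Analysis.Analysis"
begin

text \<open>Bounded operators on a (real) Hilbert space 'a :: {real_inner, complete_space}
  are modelled as functions T with bounded_linear T; the Hilbert adjoint is the
  library's adjoint (characterised by (T x) \<bullet> y = x \<bullet> (adjoint T y)).\<close>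

definition hypo_EP :: "('a::{real_inner,complete_space} \<Rightarrow> 'a) \<Rightarrow> bool" where
  "hypo_EP A \<longleftrightarrow> closed (range A) \<and> range A \<subseteq> range (adjoint A)"

definition n_hypo_EP :: "nat \<Rightarrow> ('a::{real_inner,complete_space} \<Rightarrow> 'a) \<Rightarrow> bool" where
  "n_hypo_EP n T \<longleftrightarrow> closed (range T) \<and> range (T ^^ n) \<subseteq> range (adjoint T)"

end

theory Submission
  imports Defs
begin

text \<open>The library defines \<open>adjoint\<close> by Hilbert choice and proves its defining identity only in
  finite dimensions. In a real Hilbert space the identity holds for every bounded linear map by
  the Riesz representation theorem, which follows from the existence of a vector of minimal norm
  in a closed convex set. Hence \<open>adjoint (T ^^ n) = adjoint T ^^ n\<close>, whose range lies in that
  of \<open>adjoint T\<close> when \<open>n \<ge> 1\<close>, so \<open>R(T\<^sup>n) \<subseteq> R((T\<^sup>n)\<^sup>*) \<subseteq> R(T\<^sup>*)\<close>.\<close>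

lemma parallelogram_law:
  fixes a b :: "'a::real_inner"
  shows "(norm (a + b))\<^sup>2 + (norm (a - b))\<^sup>2 = 2 * (norm a)\<^sup>2 + 2 * (norm b)\<^sup>2"
  by (simp add: power2_norm_eq_inner inner_commute algebra_simps)

lemma convex_norm_diff_bound:
  fixes S :: "'a::real_inner set"
  assumes "convex S" "a \<in> S" "b \<in> S" "0 \<le> d" "\<And>x. x \<in> S \<Longrightarrow> d \<le> norm x"
  shows "(norm (a - b))\<^sup>2 \<le> 2 * (norm a)\<^sup>2 + 2 * (norm b)\<^sup>2 - 4 * d\<^sup>2"
proof -
  have "(1/2) *\<^sub>R a + (1/2) *\<^sub>R b \<in> S"
    using assms(1-3) by (rule convexD) auto
  then have "d \<le> norm ((1/2) *\<^sub>R (a + b))"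
    using assms(5) by (simp add: scaleR_add_right)
  then have "2 * d \<le> norm (a + b)"
    by simp
  then have "4 * d\<^sup>2 \<le> (norm (a + b))\<^sup>2"
    using power_mono[of "2 * d" "norm (a + b)" 2] assms(4) by (simp add: power_mult_distrib)
  then show ?thesis
    using parallelogram_law[of a b] by linarith
qed

lemma convex_minimizing_sequence_Cauchy:
  fixes S :: "'a::real_inner set"
  assumes "convex S" "\<And>k. X k \<in> S" "\<And>x. x \<in> S \<Longrightarrow> d \<le> norm x"
    and "(\<lambda>k. norm (X k)) \<longlonglongrightarrow> d"
  shows "Cauchy X"
proof (rule CauchyI)
  fix e :: real
  assume "0 < e"
  have "0 \<le> d"
    using assms(4) by (rule LIMSEQ_le_const) simp
  have "(\<lambda>k. (norm (X k))\<^sup>2) \<longlonglongrightarrow> d\<^sup>2"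
    using assms(4) by (rule tendsto_power)
  then have "\<forall>\<^sub>F k in sequentially. (norm (X k))\<^sup>2 < d\<^sup>2 + e\<^sup>2 / 4"
    using \<open>0 < e\<close> by (intro order_tendstoD) auto
  then obtain M where M: "\<And>k. k \<ge> M \<Longrightarrow> (norm (X k))\<^sup>2 < d\<^sup>2 + e\<^sup>2 / 4"
    unfolding eventually_sequentially by blast
  have "norm (X m - X n) < e" if "m \<ge> M" "n \<ge> M" for m n
  proof -
    have "(norm (X m - X n))\<^sup>2 < e\<^sup>2"
      using convex_norm_diff_bound[OF assms(1,2,2) \<open>0 \<le> d\<close> assms(3), of m n]
        M[OF that(1)] M[OF that(2)] by linarith
    then show ?thesis
      using \<open>0 < e\<close> by (simp add: power_less_imp_less_base)
  qed
  then show "\<exists>M. \<forall>m\<ge>M. \<forall>n\<ge>M. norm (X m - X n) < e"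
    by blast
qed

lemma closed_convex_has_min_norm:
  fixes S :: "'a::{real_inner,complete_space} set"
  assumes "closed S" "convex S" "S \<noteq> {}"
  obtains z where "z \<in> S" "\<And>x. x \<in> S \<Longrightarrow> norm z \<le> norm x"
proof -
  define d where "d = Inf (norm ` S)"
  have bdd: "bdd_below (norm ` S)"
    by (rule bdd_belowI[of _ 0]) auto
  have d_le: "d \<le> norm x" if "x \<in> S" for x
    unfolding d_def using that bdd by (auto intro: cInf_lower)
  have "d \<in> closure (norm ` S)"
    unfolding d_def using assms(3) bdd by (intro closure_contains_Inf) auto
  then obtain Y where Y: "\<And>k. Y k \<in> norm ` S" and "Y \<longlonglongrightarrow> d"
    unfolding closure_sequential by metis
  moreover have "\<forall>k. \<exists>x. x \<in> S \<and> norm x = Y k"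
    using Y by (metis imageE)
  then obtain X where X: "\<And>k. X k \<in> S" and "\<And>k. norm (X k) = Y k"
    by metis
  ultimately have lim_norm: "(\<lambda>k. norm (X k)) \<longlonglongrightarrow> d"
    by simp
  then have "Cauchy X"
    using assms(2) X d_le by (intro convex_minimizing_sequence_Cauchy)
  then obtain z where z: "X \<longlonglongrightarrow> z"
    using convergent_eq_Cauchy convergent_def by blast
  have "z \<in> S"
    using assms(1) X z closed_sequentially by blast
  moreover have "norm z = d"
    using tendsto_norm[OF z] lim_norm by (rule LIMSEQ_unique)
  ultimately show ?thesis
    using that d_le by simp
qed

lemma inner_eq_zero_if_norm_le_add:
  fixes z x :: "'a::real_inner"
  assumes "\<And>t. norm z \<le> norm (z + t *\<^sub>R x)"
  shows "z \<bullet> x = 0"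
proof (rule ccontr)
  assume "z \<bullet> x \<noteq> 0"
  then have "x \<bullet> x > 0"
    by auto
  define t where "t = - (z \<bullet> x) / (x \<bullet> x)"
  have "z \<bullet> z \<le> (z + t *\<^sub>R x) \<bullet> (z + t *\<^sub>R x)"
    using assms[of t] by (simp add: norm_eq_sqrt_inner)
  also have "\<dots> = z \<bullet> z + t * (2 * (z \<bullet> x) + t * (x \<bullet> x))"
    by (simp add: inner_commute algebra_simps)
  also have "\<dots> = z \<bullet> z - (z \<bullet> x)\<^sup>2 / (x \<bullet> x)"
    using \<open>x \<bullet> x > 0\<close> unfolding t_def by (simp add: power2_eq_square)
  finally have "(z \<bullet> x)\<^sup>2 / (x \<bullet> x) \<le> 0"
    by simp
  moreover have "(z \<bullet> x)\<^sup>2 / (x \<bullet> x) > 0"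
    using \<open>z \<bullet> x \<noteq> 0\<close> \<open>x \<bullet> x > 0\<close> by simp
  ultimately show False
    by simp
qed

theorem riesz_representation:
  fixes f :: "'a::{real_inner,complete_space} \<Rightarrow> real"
  assumes "bounded_linear f"
  obtains w where "\<And>x. f x = x \<bullet> w"
proof (cases "\<forall>x. f x = 0")
  case True
  then show ?thesis
    using that[of 0] by simp
next
  case False
  interpret f: bounded_linear f by fact
  obtain u where "f u \<noteq> 0"
    using False by blast
  define S where "S = {x. f x = 1}"
  have "closed S"
    unfolding S_def by (intro closed_Collect_eq f.continuous_on continuous_on_const continuous_on_id)
  moreover have "convex S"
    unfolding S_def convex_def by (simp add: f.add f.scale)
  moreover have "(1 / f u) *\<^sub>R u \<in> S"
    unfolding S_def using \<open>f u \<noteq> 0\<close> by (simp add: f.scale)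
  ultimately obtain z where "z \<in> S" and z_min: "\<And>x. x \<in> S \<Longrightarrow> norm z \<le> norm x"
    using closed_convex_has_min_norm by blast
  then have "f z = 1"
    unfolding S_def by simp
  have z_orth: "z \<bullet> x = 0" if "f x = 0" for x
    using z_min \<open>f z = 1\<close> that unfolding S_def
    by (intro inner_eq_zero_if_norm_le_add) (simp add: f.add f.scale)
  have "z \<bullet> z \<noteq> 0"
    using \<open>f z = 1\<close> f.zero by auto
  have "f x = x \<bullet> ((1 / (z \<bullet> z)) *\<^sub>R z)" for x
  proof -
    have "z \<bullet> (x - f x *\<^sub>R z) = 0"
      using \<open>f z = 1\<close> by (intro z_orth) (simp add: f.diff f.scale)
    then show ?thesis
      using \<open>z \<bullet> z \<noteq> 0\<close> by (simp add: inner_diff inner_commute field_simps)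
  qed
  then show ?thesis
    by (rule that)
qed

lemma bounded_linear_adjoint_works:
  fixes f :: "'a::{real_inner,complete_space} \<Rightarrow> 'b::real_inner"
  assumes "bounded_linear f"
  shows "x \<bullet> adjoint f y = f x \<bullet> y"
proof -
  have "\<exists>w. \<forall>x. f x \<bullet> y = x \<bullet> w" for y
    using riesz_representation[OF bounded_linear_compose[OF bounded_linear_inner_left assms]]
    by metis
  then have "\<exists>g. \<forall>x y. f x \<bullet> y = x \<bullet> g y"
    by metis
  then have "\<forall>x y. f x \<bullet> y = x \<bullet> adjoint f y"
    unfolding adjoint_def by (rule someI_ex)
  then show ?thesis
    by simp
qed

lemma adjoint_funpow:
  fixes f :: "'a::{real_inner,complete_space} \<Rightarrow> 'a"
  assumes "bounded_linear f"
  shows "adjoint (f ^^ n) = adjoint f ^^ n"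
proof (rule adjoint_unique)
  have "(f ^^ n) x \<bullet> y = x \<bullet> (adjoint f ^^ n) y" for x y
  proof (induction n arbitrary: x)
    case 0
    then show ?case
      by simp
  next
    case (Suc n)
    have "(f ^^ Suc n) x \<bullet> y = (f ^^ n) (f x) \<bullet> y"
      by (simp only: funpow_Suc_right comp_def)
    also have "\<dots> = f x \<bullet> (adjoint f ^^ n) y"
      by (rule Suc.IH)
    also have "\<dots> = x \<bullet> (adjoint f ^^ Suc n) y"
      by (simp add: bounded_linear_adjoint_works[OF assms])
    finally show ?case .
  qed
  then show "\<forall>x y. (f ^^ n) x \<bullet> y = x \<bullet> (adjoint f ^^ n) y"
    by blast
qed

lemma range_funpow_subset:
  fixes f :: "'a \<Rightarrow> 'a"
  assumes "n \<ge> 1"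
  shows "range (f ^^ n) \<subseteq> range f"
proof -
  obtain m where "n = Suc m"
    using assms by (cases n) auto
  then show ?thesis
    by auto
qed

theorem mainTheorem14:
  fixes T :: "'a::{real_inner,complete_space} \<Rightarrow> 'a" and n :: nat
  assumes "bounded_linear T"
    and "closed (range T)"
    and "n \<ge> 1"
    and "hypo_EP (T ^^ n)"
  shows "n_hypo_EP n T"
proof -
  have "range (T ^^ n) \<subseteq> range (adjoint (T ^^ n))"
    using assms(4) unfolding hypo_EP_def by blast
  also have "\<dots> = range (adjoint T ^^ n)"
    by (simp add: adjoint_funpow[OF assms(1)])
  also have "\<dots> \<subseteq> range (adjoint T)"
    using assms(3) by (rule range_funpow_subset)
  finally show ?thesis
    unfolding n_hypo_EP_def using assms(2) by blast
qed

end
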